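(* Under the hypotheses of Theorem 5.1 (odd composition ${\underline{\kappa}}$, $p\ge1$, partition $\Pi=(I_0,I^0_1,I^1_1,\dots,I^0_p,I^1_p)$ of $\{1,\dots,n\}$ into nonempty sets except that $I_0=\emptyset$ is allowed when $\ell({\underline{\kappa}})\ge3$, wall $W_\Pi=\{\sum_{i\in I^0_s}b_i=\sum_{j\in I^1_s}b_j,\ s=1..p\}$), let $G\in\mathcal{RG}^{{\underline{\kappa}},*}_{g,n}$ and let $e\in S(G)$ be a static edge whose forced weight $f_e$ vanishes identically on $W_\Pi$. Then $e$ is a bridge of $G$.
   Context: $\mathcal{RG}^{{\underline{\kappa}},*}_{g,n}$: connected ribbon graphs (cyclically ordered half-edges at vertices) of genus $g$ with $n$ labeled vertices and faces of odd degrees ${\underline{\kappa}}$. An edge $e$ is static if some connected component of $G-e$ is bipartite. For static $e$ with $I,J\subset\{1..n\}$ the labels of the two color classes of the bipartite component of $G-e$ ($e$ attached to class $I$), the forced weight is $f_e(\underline b)=\sum_{I}b_i-\sum_J b_j$ if $e$ is a bridge and $\tfrac12(\sum_Ib_i-\sum_Jb_j)$ otherwise; it equals $w(e)$ for any weight function $w$ with vertex perimeters $\underline b$. *)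

theory Defs
  imports "HOL-Combinatorics.Permutations" "HOL-Library.Multiset" Complex_Main
begin

text \<open>A ribbon graph is given by a finite set H of half-edges, a permutation sigma of H
(its cycles are the vertices, with the cyclic order of half-edges), a fixed-point-free
involution alpha of H (its orbits are the edges), and a vertex labelling lab of the
half-edges which is constant exactly on sigma-cycles and whose image is {1..n}.\<close>

definition same_sigma_cycle :: "('h \<Rightarrow> 'h) \<Rightarrow> 'h \<Rightarrow> 'h \<Rightarrow> bool" where
  "same_sigma_cycle \<sigma> h h' \<longleftrightarrow> (\<exists>k. (\<sigma> ^^ k) h = h')"

definition ribbon_graph :: "'h set \<Rightarrow> ('h \<Rightarrow> 'h) \<Rightarrow> ('h \<Rightarrow> 'h) \<Rightarrow> ('h \<Rightarrow> nat) \<Rightarrow> nat \<Rightarrow> bool" where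
  "ribbon_graph H \<sigma> \<alpha> lab n \<longleftrightarrow>
     finite H \<and> \<sigma> permutes H \<and> \<alpha> permutes H \<and>
     (\<forall>h\<in>H. \<alpha> h \<noteq> h \<and> \<alpha> (\<alpha> h) = h) \<and>
     lab ` H = {1..n} \<and>
     (\<forall>h\<in>H. \<forall>h'\<in>H. lab h = lab h' \<longleftrightarrow> same_sigma_cycle \<sigma> h h')"

definition face_of :: "('h \<Rightarrow> 'h) \<Rightarrow> ('h \<Rightarrow> 'h) \<Rightarrow> 'h \<Rightarrow> 'h set" where
  "face_of \<sigma> \<alpha> h = {((\<sigma> \<circ> \<alpha>) ^^ k) h | k. True}"

definition faces :: "'h set \<Rightarrow> ('h \<Rightarrow> 'h) \<Rightarrow> ('h \<Rightarrow> 'h) \<Rightarrow> 'h set set" where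
  "faces H \<sigma> \<alpha> = face_of \<sigma> \<alpha> ` H"

definition face_degrees :: "'h set \<Rightarrow> ('h \<Rightarrow> 'h) \<Rightarrow> ('h \<Rightarrow> 'h) \<Rightarrow> nat multiset" where
  "face_degrees H \<sigma> \<alpha> = image_mset card (mset_set (faces H \<sigma> \<alpha>))"

definition edges :: "'h set \<Rightarrow> ('h \<Rightarrow> 'h) \<Rightarrow> 'h set set" where
  "edges H \<alpha> = {{h, \<alpha> h} | h. h \<in> H}"

text \<open>Adjacency / reachability among vertex labels in the graph with half-edges H' only
(H' = H for G, H' = H - e for G - e).\<close>

definition adj :: "'h set \<Rightarrow> ('h \<Rightarrow> 'h) \<Rightarrow> ('h \<Rightarrow> nat) \<Rightarrow> nat \<Rightarrow> nat \<Rightarrow> bool" where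
  "adj H' \<alpha> lab u v \<longleftrightarrow> (\<exists>h\<in>H'. lab h = u \<and> lab (\<alpha> h) = v)"

definition reach :: "'h set \<Rightarrow> ('h \<Rightarrow> 'h) \<Rightarrow> ('h \<Rightarrow> nat) \<Rightarrow> nat \<Rightarrow> nat \<Rightarrow> bool" where
  "reach H' \<alpha> lab = (adj H' \<alpha> lab)\<^sup>*\<^sup>*"

definition connected_rg :: "'h set \<Rightarrow> ('h \<Rightarrow> 'h) \<Rightarrow> ('h \<Rightarrow> nat) \<Rightarrow> nat \<Rightarrow> bool" where
  "connected_rg H \<alpha> lab n \<longleftrightarrow> (\<forall>u\<in>{1..n}. \<forall>v\<in>{1..n}. reach H \<alpha> lab u v)"

text \<open>The class RG^{kappa,*}_{g,n}: connected ribbon graphs with n labelled vertices,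
genus g (Euler characteristic V - E + F = 2 - 2g), face degrees given by kappa.\<close>

definition RG :: "nat \<Rightarrow> nat \<Rightarrow> nat list \<Rightarrow> 'h set \<Rightarrow> ('h \<Rightarrow> 'h) \<Rightarrow> ('h \<Rightarrow> 'h) \<Rightarrow> ('h \<Rightarrow> nat) \<Rightarrow> bool" where
  "RG g n \<kappa> H \<sigma> \<alpha> lab \<longleftrightarrow>
     ribbon_graph H \<sigma> \<alpha> lab n \<and> connected_rg H \<alpha> lab n \<and>
     int n - int (card H div 2) + int (card (faces H \<sigma> \<alpha>)) = 2 - 2 * int g \<and>
     face_degrees H \<sigma> \<alpha> = mset \<kappa>"

definition is_bridge :: "'h set \<Rightarrow> ('h \<Rightarrow> 'h) \<Rightarrow> ('h \<Rightarrow> nat) \<Rightarrow> 'h set \<Rightarrow> bool" where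
  "is_bridge H \<alpha> lab e \<longleftrightarrow>
     (\<exists>h\<in>e. \<not> reach (H - e) \<alpha> lab (lab h) (lab (\<alpha> h)))"

text \<open>Static data: C is a connected component of G - e which is bipartite with colour
classes I and J, and e is attached to (has an endpoint in) the class I.\<close>

definition static_data :: "'h set \<Rightarrow> ('h \<Rightarrow> 'h) \<Rightarrow> ('h \<Rightarrow> nat) \<Rightarrow> nat \<Rightarrow> 'h set \<Rightarrow> nat set \<Rightarrow> nat set \<Rightarrow> bool" where
  "static_data H \<alpha> lab n e I J \<longleftrightarrow>
     e \<in> edges H \<alpha> \<and>
     (\<exists>u\<in>{1..n}. I \<union> J = {v\<in>{1..n}. reach (H - e) \<alpha> lab u v}) \<and>
     I \<inter> J = {} \<and>
     (\<forall>h\<in>H - e. lab h \<in> I \<union> J \<longrightarrow> (lab h \<in> I \<longleftrightarrow> lab (\<alpha> h) \<in> J)) \<and>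
     (\<exists>h\<in>e. lab h \<in> I)"

definition static_edge :: "'h set \<Rightarrow> ('h \<Rightarrow> 'h) \<Rightarrow> ('h \<Rightarrow> nat) \<Rightarrow> nat \<Rightarrow> 'h set \<Rightarrow> bool" where
  "static_edge H \<alpha> lab n e \<longleftrightarrow> (\<exists>I J. static_data H \<alpha> lab n e I J)"

definition forced_weight :: "bool \<Rightarrow> nat set \<Rightarrow> nat set \<Rightarrow> (nat \<Rightarrow> real) \<Rightarrow> real" where
  "forced_weight br I J b =
     (if br then 1 else 1/2) * ((\<Sum>i\<in>I. b i) - (\<Sum>j\<in>J. b j))"

text \<open>Pi = (I0, A 1, B 1, ..., A p, B p) with A s = I^0_s, B s = I^1_s.\<close>

definition admissible_partition ::
  "nat list \<Rightarrow> nat \<Rightarrow> nat \<Rightarrow> nat set \<Rightarrow> (nat \<Rightarrow> nat set) \<Rightarrow> (nat \<Rightarrow> nat set) \<Rightarrow> bool" where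
  "admissible_partition \<kappa> n p I0 A B \<longleftrightarrow>
     I0 \<union> (\<Union>s\<in>{1..p}. A s \<union> B s) = {1..n} \<and>
     (\<forall>s\<in>{1..p}. I0 \<inter> A s = {} \<and> I0 \<inter> B s = {}) \<and>
     (\<forall>s\<in>{1..p}. \<forall>t\<in>{1..p}. A s \<inter> B t = {}) \<and>
     (\<forall>s\<in>{1..p}. \<forall>t\<in>{1..p}. s \<noteq> t \<longrightarrow> A s \<inter> A t = {} \<and> B s \<inter> B t = {}) \<and>
     (\<forall>s\<in>{1..p}. A s \<noteq> {} \<and> B s \<noteq> {}) \<and>
     (I0 \<noteq> {} \<or> length \<kappa> \<ge> 3)"

definition in_wall :: "nat \<Rightarrow> (nat \<Rightarrow> nat set) \<Rightarrow> (nat \<Rightarrow> nat set) \<Rightarrow> (nat \<Rightarrow> real) \<Rightarrow> bool" where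
  "in_wall p A B b \<longleftrightarrow> (\<forall>s\<in>{1..p}. (\<Sum>i\<in>A s. b i) = (\<Sum>j\<in>B s. b j))"

definition odd_composition :: "nat list \<Rightarrow> bool" where
  "odd_composition \<kappa> \<longleftrightarrow> \<kappa> \<noteq> [] \<and> (\<forall>k\<in>set \<kappa>. odd k)"

end

theory Submission
  imports Defs "HOL-Combinatorics.Orbits"
begin

text \<open>If \<open>e\<close> is not a bridge, deleting it does not disconnect \<open>G\<close>, so the bipartite component
  of \<open>G - e\<close> contains every vertex. A vertex of \<open>I\<^sub>0\<close> could then be given weight \<open>1\<close> on the wall
  with a nonzero forced weight, so \<open>I\<^sub>0 = {}\<close> and \<open>G\<close> has at least three faces. Colour each
  half-edge by the class of its vertex: every edge except \<open>e\<close> joins the two classes, and \<open>\<sigma>\<close> keeps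
  the colour, so going around a face (a cycle of \<open>\<sigma> \<circ> \<alpha>\<close>) the colour changes at every half-edge
  outside \<open>e\<close>. A cycle changes colour an even number of times and faces have odd degree, so
  every face contains a half-edge of \<open>e\<close>; hence there are at most two faces.\<close>

lemma even_card_colour_changes:
  fixes c :: "'a \<Rightarrow> bool"
  assumes "finite F" and "bij_betw f F F"
  shows "even (card {x\<in>F. c (f x) \<noteq> c x})"
proof -
  define P where "P = {x\<in>F. c x \<and> \<not> c (f x)}"
  define Q where "Q = {x\<in>F. \<not> c x \<and> c (f x)}"
  define R where "R = {x\<in>F. c x \<and> c (f x)}"
  have fin: "finite P" "finite Q" "finite R"
    using assms(1) unfolding P_def Q_def R_def by auto
  have "card {x\<in>F. c (f x)} = card {y\<in>F. c y}"
    using bij_betw_subset[OF assms(2), of "{x\<in>F. c (f x)}"] assms(2)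
    by (intro bij_betw_same_card[of f]) (auto simp: bij_betw_def)
  moreover have "{x\<in>F. c (f x)} = R \<union> Q" "{y\<in>F. c y} = R \<union> P"
    unfolding P_def Q_def R_def by auto
  moreover have "R \<inter> Q = {}" "R \<inter> P = {}"
    unfolding P_def Q_def R_def by auto
  ultimately have "card Q = card P"
    using fin by (simp add: card_Un_disjoint)
  moreover have "{x\<in>F. c (f x) \<noteq> c x} = P \<union> Q" "P \<inter> Q = {}"
    unfolding P_def Q_def by auto
  ultimately show ?thesis
    using fin by (simp add: card_Un_disjoint)
qed

lemma ribbon_graph_face_permutes:
  assumes "ribbon_graph H \<sigma> \<alpha> lab n"
  shows "\<sigma> \<circ> \<alpha> permutes H"
  using assms permutes_compose unfolding ribbon_graph_def by blast

lemma ribbon_graph_face_of_eq_orbit: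
  assumes "ribbon_graph H \<sigma> \<alpha> lab n"
  shows "face_of \<sigma> \<alpha> h = orbit (\<sigma> \<circ> \<alpha>) h"
proof -
  have "finite H"
    using assms unfolding ribbon_graph_def by simp
  then have "permutation (\<sigma> \<circ> \<alpha>)"
    using ribbon_graph_face_permutes[OF assms] permutation_permutes by blast
  then show ?thesis
    unfolding face_of_def by (simp add: orbit_altdef_permutation)
qed

lemma ribbon_graph_lab_sigma:
  assumes "ribbon_graph H \<sigma> \<alpha> lab n" and "x \<in> H"
  shows "lab (\<sigma> x) = lab x"
proof -
  have "\<sigma> x \<in> H"
    using assms unfolding ribbon_graph_def by (simp add: permutes_in_image)
  moreover have "same_sigma_cycle \<sigma> x (\<sigma> x)"
    unfolding same_sigma_cycle_def by (rule exI[of _ 1]) simp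
  moreover have "\<forall>h\<in>H. \<forall>h'\<in>H. lab h = lab h' \<longleftrightarrow> same_sigma_cycle \<sigma> h h'"
    using assms(1) unfolding ribbon_graph_def by blast
  ultimately show ?thesis
    using assms(2) by metis
qed

lemma card_faces_eq_length:
  assumes "face_degrees H \<sigma> \<alpha> = mset \<kappa>"
  shows "card (faces H \<sigma> \<alpha>) = length \<kappa>"
  using arg_cong[OF assms, of size] unfolding face_degrees_def by simp

lemma odd_card_face:
  assumes "finite H" and "face_degrees H \<sigma> \<alpha> = mset \<kappa>" and "odd_composition \<kappa>"
    and "F \<in> faces H \<sigma> \<alpha>"
  shows "odd (card F)"
proof -
  have "finite (faces H \<sigma> \<alpha>)"
    using assms(1) unfolding faces_def by simp
  then have "card F \<in># face_degrees H \<sigma> \<alpha>"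
    using assms(4) unfolding face_degrees_def by simp
  then have "card F \<in> set \<kappa>"
    using assms(2) by simp
  then show ?thesis
    using assms(3) unfolding odd_composition_def by blast
qed

lemma face_subset_half_edges:
  assumes rg: "ribbon_graph H \<sigma> \<alpha> lab n" and "F \<in> faces H \<sigma> \<alpha>"
  shows "F \<subseteq> H"
proof -
  have "\<sigma> \<circ> \<alpha> permutes H"
    by (rule ribbon_graph_face_permutes[OF rg])
  moreover obtain h where "h \<in> H" and "F = face_of \<sigma> \<alpha> h"
    using assms(2) unfolding faces_def by blast
  ultimately show ?thesis
    by (simp add: ribbon_graph_face_of_eq_orbit[OF rg] permutes_orbit_subset)
qed

lemma odd_face_has_monochromatic_half_edge:
  fixes c :: "'h \<Rightarrow> bool"
  assumes rg: "ribbon_graph H \<sigma> \<alpha> lab n" and c_\<sigma>: "\<forall>x\<in>H. c (\<sigma> x) = c x"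
    and F: "F \<in> faces H \<sigma> \<alpha>" and odd: "odd (card F)"
  shows "\<exists>x\<in>F. c (\<alpha> x) = c x"
proof (rule ccontr)
  assume no_monochromatic: "\<not> ?thesis"
  from rg have "\<alpha> permutes H" and "finite H"
    unfolding ribbon_graph_def by simp_all
  have "F \<subseteq> H"
    by (rule face_subset_half_edges[OF rg F])
  with \<open>finite H\<close> have "finite F"
    by (rule finite_subset[rotated])
  have "c ((\<sigma> \<circ> \<alpha>) x) \<noteq> c x" if "x \<in> F" for x
  proof -
    have "\<alpha> x \<in> H"
      using \<open>\<alpha> permutes H\<close> \<open>F \<subseteq> H\<close> that by (auto simp: permutes_in_image)
    then show ?thesis
      using c_\<sigma> no_monochromatic that by simp
  qed
  then have all_change: "{x\<in>F. c ((\<sigma> \<circ> \<alpha>) x) \<noteq> c x} = F"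
    by blast
  obtain h where F_orbit: "F = orbit (\<sigma> \<circ> \<alpha>) h"
    using F unfolding faces_def ribbon_graph_face_of_eq_orbit[OF rg] by blast
  have "(\<sigma> \<circ> \<alpha>) ` F \<subseteq> F"
    unfolding F_orbit by (auto intro: orbit.step[of _ "\<sigma> \<circ> \<alpha>", simplified])
  moreover have "inj_on (\<sigma> \<circ> \<alpha>) F"
    using permutes_inj[OF ribbon_graph_face_permutes[OF rg]] by (simp add: inj_on_def inj_def)
  ultimately have "bij_betw (\<sigma> \<circ> \<alpha>) F F"
    using \<open>finite F\<close> endo_inj_surj unfolding bij_betw_def by blast
  with \<open>finite F\<close> have "even (card {x\<in>F. c ((\<sigma> \<circ> \<alpha>) x) \<noteq> c x})"
    by (rule even_card_colour_changes)
  with all_change odd show False by simp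
qed

lemma card_faces_le_hitting_set:
  assumes rg: "ribbon_graph H \<sigma> \<alpha> lab n" and "finite S"
    and hit: "\<forall>F\<in>faces H \<sigma> \<alpha>. F \<inter> S \<noteq> {}"
  shows "card (faces H \<sigma> \<alpha>) \<le> card S"
proof -
  have "finite H"
    using rg unfolding ribbon_graph_def by simp
  with ribbon_graph_face_permutes[OF rg] have cyclic: "cyclic_on (\<sigma> \<circ> \<alpha>) (orbit (\<sigma> \<circ> \<alpha>) h)" for h
    by (rule cyclic_on_orbit)
  have "faces H \<sigma> \<alpha> \<subseteq> face_of \<sigma> \<alpha> ` S"
  proof
    fix F assume F: "F \<in> faces H \<sigma> \<alpha>"
    then obtain x where x: "x \<in> F" "x \<in> S" using hit by blast
    from F obtain h where F_orbit: "F = orbit (\<sigma> \<circ> \<alpha>) h"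
      unfolding faces_def ribbon_graph_face_of_eq_orbit[OF rg] by blast
    have "face_of \<sigma> \<alpha> x = F"
      unfolding ribbon_graph_face_of_eq_orbit[OF rg] F_orbit
      using cyclic x(1) F_orbit by (simp add: orbit_cyclic_eq3)
    then show "F \<in> face_of \<sigma> \<alpha> ` S" using x by blast
  qed
  then have "card (faces H \<sigma> \<alpha>) \<le> card (face_of \<sigma> \<alpha> ` S)"
    using \<open>finite S\<close> by (intro card_mono) auto
  also have "\<dots> \<le> card S"
    by (rule card_image_le[OF \<open>finite S\<close>])
  finally show ?thesis .
qed

lemma edge_finite:
  assumes "e \<in> edges H \<alpha>"
  shows "finite e"
  using assms unfolding edges_def by auto

lemma edge_card_le_2:
  assumes "e \<in> edges H \<alpha>"
  shows "card e \<le> 2"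
  using assms unfolding edges_def by (auto simp: card_insert_if)

lemma reach_delete_non_bridge:
  assumes non_bridge: "\<forall>h\<in>e. reach (H - e) \<alpha> lab (lab h) (lab (\<alpha> h))"
    and "reach H \<alpha> lab u v"
  shows "reach (H - e) \<alpha> lab u v"
  using assms(2) unfolding reach_def
proof (induction rule: rtranclp_induct)
  case base
  then show ?case by simp
next
  case (step y z)
  from step.hyps(2) obtain h where h: "h \<in> H" "lab h = y" "lab (\<alpha> h) = z"
    unfolding adj_def by blast
  show ?case
  proof (cases "h \<in> e")
    case True
    then have "(adj (H - e) \<alpha> lab)\<^sup>*\<^sup>* y z"
      using non_bridge h unfolding reach_def by blast
    then show ?thesis using step.IH by (rule rtranclp_trans[rotated])
  next
    case False
    then have "adj (H - e) \<alpha> lab y z"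
      using h unfolding adj_def by blast
    then show ?thesis using step.IH by (rule rtranclp.rtrancl_into_rtrancl[rotated])
  qed
qed

lemma static_component_eq_all_vertices:
  assumes "connected_rg H \<alpha> lab n" and "static_data H \<alpha> lab n e I J"
    and "\<not> is_bridge H \<alpha> lab e"
  shows "I \<union> J = {1..n}"
proof -
  obtain u where u: "u \<in> {1..n}" and component: "I \<union> J = {v\<in>{1..n}. reach (H - e) \<alpha> lab u v}"
    using assms(2) unfolding static_data_def by blast
  have "reach (H - e) \<alpha> lab u v" if "v \<in> {1..n}" for v
  proof (rule reach_delete_non_bridge)
    show "\<forall>h\<in>e. reach (H - e) \<alpha> lab (lab h) (lab (\<alpha> h))"
      using assms(3) unfolding is_bridge_def by blast
    show "reach H \<alpha> lab u v"
      using assms(1) u that unfolding connected_rg_def by blast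
  qed
  with component show ?thesis by auto
qed

lemma static_data_lab_alpha_in_iff:
  assumes rg: "ribbon_graph H \<sigma> \<alpha> lab n" and static: "static_data H \<alpha> lab n e I J"
    and cover: "I \<union> J = {1..n}" and x: "x \<in> H - e"
  shows "lab (\<alpha> x) \<in> I \<longleftrightarrow> lab x \<notin> I"
proof -
  from static have "I \<inter> J = {}"
    and bipartite: "\<forall>h\<in>H - e. lab h \<in> I \<union> J \<longrightarrow> (lab h \<in> I \<longleftrightarrow> lab (\<alpha> h) \<in> J)"
    unfolding static_data_def by simp_all
  from rg have "lab ` H = {1..n}" and "\<alpha> permutes H"
    unfolding ribbon_graph_def by simp_all
  then have "lab x \<in> I \<union> J" and "lab (\<alpha> x) \<in> I \<union> J"
    using x cover by (auto simp: permutes_in_image)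
  with \<open>I \<inter> J = {}\<close> bipartite x show ?thesis
    by blast
qed

lemma static_edge_meets_odd_face:
  assumes rg: "ribbon_graph H \<sigma> \<alpha> lab n" and static: "static_data H \<alpha> lab n e I J"
    and cover: "I \<union> J = {1..n}" and F: "F \<in> faces H \<sigma> \<alpha>" and odd: "odd (card F)"
  shows "F \<inter> e \<noteq> {}"
proof -
  have "\<forall>x\<in>H. (lab (\<sigma> x) \<in> I) = (lab x \<in> I)"
    using ribbon_graph_lab_sigma[OF rg] by simp
  then obtain x where "x \<in> F" and "(lab (\<alpha> x) \<in> I) = (lab x \<in> I)"
    using odd_face_has_monochromatic_half_edge[OF rg _ F odd, where c = "\<lambda>x. lab x \<in> I"]
    by blast
  moreover have "x \<in> H"
    using face_subset_half_edges[OF rg F] \<open>x \<in> F\<close> by blast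
  ultimately have "x \<in> e"
    using static_data_lab_alpha_in_iff[OF rg static cover, of x] by blast
  with \<open>x \<in> F\<close> show ?thesis by blast
qed

lemma static_edge_meets_every_face:
  assumes "ribbon_graph H \<sigma> \<alpha> lab n" and "static_data H \<alpha> lab n e I J"
    and "I \<union> J = {1..n}" and "face_degrees H \<sigma> \<alpha> = mset \<kappa>" and "odd_composition \<kappa>"
  shows "\<forall>F\<in>faces H \<sigma> \<alpha>. F \<inter> e \<noteq> {}"
proof
  fix F assume F: "F \<in> faces H \<sigma> \<alpha>"
  have "finite H"
    using assms(1) unfolding ribbon_graph_def by simp
  then have "odd (card F)"
    using assms(4,5) F by (rule odd_card_face)
  with assms(1-3) F show "F \<inter> e \<noteq> {}"
    by (rule static_edge_meets_odd_face)
qed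

lemma in_wall_indicator:
  assumes "\<forall>s\<in>{1..p}. i \<notin> A s \<and> i \<notin> B s"
  shows "in_wall p A B (\<lambda>j. if j = i then 1 else 0)"
proof -
  have "(\<Sum>j\<in>S. if j = i then 1 else 0 :: real) = 0" if "i \<notin> S" for S
    using that by (intro sum.neutral) auto
  then show ?thesis
    using assms unfolding in_wall_def by simp
qed

lemma forced_weight_indicator_nonzero:
  assumes "finite I" and "finite J" and "I \<inter> J = {}" and "i \<in> I \<union> J"
  shows "forced_weight br I J (\<lambda>j. if j = i then 1 else 0) \<noteq> 0"
  using assms unfolding forced_weight_def by auto

lemma forced_weight_vanishing_on_wall_avoids:
  assumes vanish: "\<forall>b. in_wall p A B b \<longrightarrow> forced_weight br I J b = 0"
    and "finite I" and "finite J" and "I \<inter> J = {}"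
    and "\<forall>s\<in>{1..p}. i \<notin> A s \<and> i \<notin> B s"
  shows "i \<notin> I \<union> J"
proof
  assume "i \<in> I \<union> J"
  with assms(2,3,4) have "forced_weight br I J (\<lambda>j. if j = i then 1 else 0) \<noteq> 0"
    by (rule forced_weight_indicator_nonzero)
  moreover have "in_wall p A B (\<lambda>j. if j = i then 1 else 0)"
    using assms(5) by (rule in_wall_indicator)
  ultimately show False
    using vanish by blast
qed

lemma forced_weight_vanishing_on_wall_imp_empty_core:
  assumes "admissible_partition \<kappa> n p I0 A B"
    and vanish: "\<forall>b. in_wall p A B b \<longrightarrow> forced_weight br I J b = 0"
    and cover: "I \<union> J = {1..n}" and "I \<inter> J = {}"
  shows "I0 = {}"
proof (rule equals0I)
  fix i assume "i \<in> I0"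
  with assms(1) cover have "\<forall>s\<in>{1..p}. i \<notin> A s \<and> i \<notin> B s" and "i \<in> I \<union> J"
    unfolding admissible_partition_def by auto
  moreover have "finite I" and "finite J"
    using cover by (metis finite_Un finite_atLeastAtMost)+
  ultimately show False
    using forced_weight_vanishing_on_wall_avoids[OF vanish] \<open>I \<inter> J = {}\<close> by blast
qed

theorem lemma5p3:
  fixes H :: "'h set" and \<sigma> \<alpha> :: "'h \<Rightarrow> 'h" and lab :: "'h \<Rightarrow> nat"
    and g n p :: nat and \<kappa> :: "nat list"
    and I0 :: "nat set" and A B :: "nat \<Rightarrow> nat set"
    and e :: "'h set" and I J :: "nat set"
  assumes "odd_composition \<kappa>"
    and "p \<ge> 1"
    and "admissible_partition \<kappa> n p I0 A B"
    and "RG g n \<kappa> H \<sigma> \<alpha> lab"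
    and "static_data H \<alpha> lab n e I J"
    and "\<forall>b. in_wall p A B b \<longrightarrow> forced_weight (is_bridge H \<alpha> lab e) I J b = 0"
  shows "is_bridge H \<alpha> lab e"
proof (rule ccontr)
  assume not_bridge: "\<not> is_bridge H \<alpha> lab e"
  from assms(4) have rg: "ribbon_graph H \<sigma> \<alpha> lab n" and con: "connected_rg H \<alpha> lab n"
    and degrees: "face_degrees H \<sigma> \<alpha> = mset \<kappa>"
    unfolding RG_def by simp_all
  from assms(5) have edge: "e \<in> edges H \<alpha>" and "I \<inter> J = {}"
    unfolding static_data_def by simp_all
  have cover: "I \<union> J = {1..n}"
    by (rule static_component_eq_all_vertices[OF con assms(5) not_bridge])
  have "I0 = {}"
    using assms(3,6) cover \<open>I \<inter> J = {}\<close> by (rule forced_weight_vanishing_on_wall_imp_empty_core)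
  with assms(3) have "length \<kappa> \<ge> 3"
    unfolding admissible_partition_def by simp
  from rg edge_finite[OF edge] static_edge_meets_every_face[OF rg assms(5) cover degrees assms(1)]
  have "card (faces H \<sigma> \<alpha>) \<le> card e"
    by (rule card_faces_le_hitting_set)
  also have "\<dots> \<le> 2"
    using edge by (rule edge_card_le_2)
  finally show False
    using card_faces_eq_length[OF degrees] \<open>length \<kappa> \<ge> 3\<close> by simp
qed

end
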